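(* The average number of leaves of a uniformly random Retakh plane tree with $n$ nodes is asymptotically $\frac{4}{9}n$ as $n\to\infty$. Equivalently, the average number of peaks of a uniformly random Retakh Dyck path of semilength $n$ is $\sim\frac49 n$.
   Context: A Retakh plane tree is a plane (ordered rooted) tree in which every non-root leaf has depth $1$ or even depth (root depth $0$); a leaf is a node without children. A Retakh Dyck path is a Dyck path all of whose peaks (up-step followed by down-step) are at level $1$ or at an even level; under the standard bijection, Dyck paths of semilength $n$ correspond to plane trees with $n+1$ nodes and peaks correspond to non-root leaves. *)

theory Defs
  imports Complex_Main "HOL-Library.Landau_Symbols"
begin

datatype ptree = Node "ptree list"

fun nodes :: "ptree \<Rightarrow> nat" where
  "nodes (Node ts) = 1 + sum_list (map nodes ts)"

fun leaves :: "ptree \<Rightarrow> nat" where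
  "leaves (Node ts) = (if ts = [] then 1 else sum_list (map leaves ts))"

fun leaf_depths :: "nat \<Rightarrow> ptree \<Rightarrow> nat set" where
  "leaf_depths d (Node ts) =
     (if ts = [] then {d} else \<Union> (set (map (leaf_depths (Suc d)) ts)))"

definition retakh :: "ptree \<Rightarrow> bool" where
  "retakh t \<longleftrightarrow> (\<forall>d \<in> leaf_depths 0 t. d \<noteq> 0 \<longrightarrow> d = 1 \<or> even d)"

definition retakh_trees :: "nat \<Rightarrow> ptree set" where
  "retakh_trees n = {t. retakh t \<and> nodes t = n}"

definition avg_leaves :: "nat \<Rightarrow> real" where
  "avg_leaves n = (\<Sum>t\<in>retakh_trees n. real (leaves t)) / real (card (retakh_trees n))"

end

theory Submission
  imports Defs "HOL-Computational_Algebra.Formal_Power_Series"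
begin

(*
  The subtrees of the root of a Retakh tree are single nodes or trees all of whose leaves lie at
  odd depth; a tree with all leaves at odd (even) depth hangs trees with all leaves at even (odd)
  depth from its root, the one-node tree counting as even only. Counting by size, this becomes an
  algebraic system of generating functions, solved by expressing everything through the series
  T(x) = 1/sqrt(1 - 2x - 3x^2) of the central trinomial coefficients T_n. Reading off coefficients,
  the number R_n of Retakh trees and the total number L_n of their leaves satisfy
  2n R_n = T_(n+1) - T_n and 2 L_n = 4 T_(n+1) - T_(n+2) - 6 T_(n-1) - T_(n-2). Finally
  T_(n+1)/T_n tends to 3, so L_n / R_n ~ n (4*27 - 81 - 6*3 - 1) / (27 - 9) = 4n/9.
*)

unbundle fps_syntax

section \<open>Retakh trees through leaf parities\<close>

fun leaf_parity :: "bool \<Rightarrow> ptree \<Rightarrow> bool" where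
  "leaf_parity p (Node ts) \<longleftrightarrow> (if ts = [] then p else (\<forall>t\<in>set ts. leaf_parity (\<not> p) t))"

fun all_children :: "(ptree \<Rightarrow> bool) \<Rightarrow> ptree \<Rightarrow> bool" where
  "all_children P (Node ts) \<longleftrightarrow> (\<forall>t\<in>set ts. P t)"

definition retakh_branch :: "ptree \<Rightarrow> bool" where
  "retakh_branch = all_children (leaf_parity True)"

lemma leaf_depths_shift: "leaf_depths d t = (\<lambda>x. x + d) ` leaf_depths 0 t"
proof (induction t arbitrary: d)
  case (Node ts)
  have "leaf_depths (Suc d) t = (\<lambda>x. x + d) ` leaf_depths (Suc 0) t" if "t \<in> set ts" for t
    using Node[OF that, of "Suc d"] Node[OF that, of "Suc 0"] by (simp add: image_image)
  then show ?case
    by (cases "ts = []") (simp_all add: image_UN cong: SUP_cong)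
qed

lemma leaf_depths_Node:
  "ts \<noteq> [] \<Longrightarrow> leaf_depths 0 (Node ts) = (\<Union>t\<in>set ts. Suc ` leaf_depths 0 t)"
  using leaf_depths_shift[of "Suc 0"] by simp

lemma leaf_depths_leaf [simp]: "leaf_depths d (Node []) = {d}"
  by simp

declare leaf_depths.simps [simp del]

lemma leaf_parity_iff: "leaf_parity p t \<longleftrightarrow> (\<forall>d\<in>leaf_depths 0 t. even d = p)"
proof (induction t arbitrary: p)
  case (Node ts)
  then show ?case
    by (cases "ts = []") (auto simp: leaf_depths_Node)
qed

lemma leaf_parity_True: "leaf_parity True = all_children (leaf_parity False)"
proof
  fix t show "leaf_parity True t = all_children (leaf_parity False) t"
    by (cases t) auto
qed

lemma leaf_parity_False: "leaf_parity False = (\<lambda>t. all_children (leaf_parity True) t \<and> t \<noteq> Node [])"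
proof
  fix t show "leaf_parity False t = (all_children (leaf_parity True) t \<and> t \<noteq> Node [])"
    by (cases t) auto
qed

lemma retakh_branch_iff: "retakh_branch t \<longleftrightarrow> (\<forall>d\<in>leaf_depths 0 t. d = 0 \<or> odd d)"
proof (cases t)
  case (Node ts)
  then show ?thesis
    by (cases "ts = []") (auto simp: retakh_branch_def leaf_depths_Node leaf_parity_iff)
qed

lemma retakh_eq: "retakh = all_children retakh_branch"
proof
  fix t show "retakh t = all_children retakh_branch t"
  proof (cases t)
    case (Node ts)
    then show ?thesis
      by (cases "ts = []") (auto simp: retakh_def leaf_depths_Node retakh_branch_iff)
  qed
qed

definition sized_trees :: "(ptree \<Rightarrow> bool) \<Rightarrow> nat \<Rightarrow> ptree set" where
  "sized_trees P n = {t. P t \<and> nodes t = n}"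

definition sized_forests :: "(ptree \<Rightarrow> bool) \<Rightarrow> nat \<Rightarrow> ptree list set" where
  "sized_forests P n = {ts. (\<forall>t\<in>set ts. P t) \<and> sum_list (map nodes ts) = n}"

lemma nodes_neq_0: "nodes t \<noteq> 0"
  by (cases t) auto

lemma forest_in_bounded_lists:
  assumes "sum_list (map nodes ts) \<le> n"
  shows "ts \<in> {ts. set ts \<subseteq> {t. nodes t \<le> n} \<and> length ts \<le> n}"
proof -
  have "length ts \<le> sum_list (map nodes ts)"
  proof (induction ts)
    case (Cons t ts)
    then show ?case
      using nodes_neq_0[of t] by simp
  qed simp
  moreover have "nodes t \<le> sum_list (map nodes ts)" if "t \<in> set ts" for t
    using that by (simp add: member_le_sum_list)
  ultimately show ?thesis
    using assms by (auto intro: order_trans)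
qed

lemma finite_nodes_le: "finite {t. nodes t \<le> n}"
proof (induction n)
  case 0
  then show ?case by (simp add: nodes_neq_0)
next
  case (Suc n)
  have "{t. nodes t \<le> Suc n} \<subseteq> Node ` {ts. set ts \<subseteq> {t. nodes t \<le> n} \<and> length ts \<le> n}"
  proof
    fix t assume "t \<in> {t. nodes t \<le> Suc n}"
    then show "t \<in> Node ` {ts. set ts \<subseteq> {t. nodes t \<le> n} \<and> length ts \<le> n}"
      by (cases t) (auto intro!: imageI forest_in_bounded_lists)
  qed
  then show ?case
    using finite_lists_length_le[OF Suc.IH] finite_subset by blast
qed

lemma finite_sized_trees: "finite (sized_trees P n)"
  by (rule finite_subset[OF _ finite_nodes_le[of n]]) (auto simp: sized_trees_def)

lemma finite_sized_forests: "finite (sized_forests P n)"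
proof (rule finite_subset[OF _ finite_lists_length_le[OF finite_nodes_le[of n]]])
  show "sized_forests P n \<subseteq> {ts. set ts \<subseteq> {t. nodes t \<le> n} \<and> length ts \<le> n}"
    using forest_in_bounded_lists[of _ n] by (auto simp: sized_forests_def)
qed

lemma sized_trees_0: "sized_trees P 0 = {}"
  by (auto simp: sized_trees_def nodes_neq_0)

lemma sized_forests_0: "sized_forests P 0 = {[]}"
  by (auto simp: sized_forests_def nodes_neq_0)

lemma sized_forests_Cons:
  assumes "0 < n"
  shows "sized_forests P n =
    (\<Union>k\<in>{0..n}. (\<lambda>(t, f). t # f) ` (sized_trees P k \<times> sized_forests P (n - k)))"
    (is "_ = ?rhs")
proof (intro equalityI subsetI)
  fix ts assume "ts \<in> sized_forests P n"
  with assms obtain t f where "ts = t # f"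
    by (cases ts) (auto simp: sized_forests_def)
  with \<open>ts \<in> sized_forests P n\<close> show "ts \<in> ?rhs"
    by (auto simp: sized_forests_def sized_trees_def intro!: bexI[of _ "nodes t"])
qed (auto simp: sized_forests_def sized_trees_def)

lemma sum_sized_forests_Cons:
  fixes w :: "ptree list \<Rightarrow> 'a::comm_monoid_add"
  assumes "0 < n"
  shows "(\<Sum>ts\<in>sized_forests P n. w ts) =
    (\<Sum>k=0..n. \<Sum>t\<in>sized_trees P k. \<Sum>f\<in>sized_forests P (n - k). w (t # f))"
proof -
  have "(\<Sum>ts\<in>sized_forests P n. w ts) =
      (\<Sum>k=0..n. \<Sum>ts\<in>(\<lambda>(t, f). t # f) ` (sized_trees P k \<times> sized_forests P (n - k)). w ts)"
    unfolding sized_forests_Cons[OF assms]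
    by (rule sum.UNION_disjoint)
      (simp_all add: finite_sized_trees finite_sized_forests, auto simp: sized_trees_def)
  also have "\<dots> = (\<Sum>k=0..n. \<Sum>t\<in>sized_trees P k. \<Sum>f\<in>sized_forests P (n - k). w (t # f))"
    by (simp add: sum.reindex inj_on_def case_prod_beta sum.cartesian_product)
  finally show ?thesis .
qed

section \<open>Generating functions\<close>

definition tree_gf :: "(ptree \<Rightarrow> bool) \<Rightarrow> real fps" where
  "tree_gf P = Abs_fps (\<lambda>n. real (card (sized_trees P n)))"

definition tree_leaves_gf :: "(ptree \<Rightarrow> bool) \<Rightarrow> real fps" where
  "tree_leaves_gf P = Abs_fps (\<lambda>n. \<Sum>t\<in>sized_trees P n. real (leaves t))"

definition forest_gf :: "(ptree \<Rightarrow> bool) \<Rightarrow> real fps" where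
  "forest_gf P = Abs_fps (\<lambda>n. real (card (sized_forests P n)))"

definition forest_leaves_gf :: "(ptree \<Rightarrow> bool) \<Rightarrow> real fps" where
  "forest_leaves_gf P = Abs_fps (\<lambda>n. \<Sum>ts\<in>sized_forests P n. real (sum_list (map leaves ts)))"

lemma tree_gf_nth_0: "tree_gf P $ 0 = 0"
  by (simp add: tree_gf_def sized_trees_0)

lemma forest_gf_rec: "forest_gf P = 1 + tree_gf P * forest_gf P"
proof (rule fps_ext)
  fix n
  show "forest_gf P $ n = (1 + tree_gf P * forest_gf P) $ n"
  proof (cases "n = 0")
    case True
    then show ?thesis
      by (simp add: forest_gf_def tree_gf_def sized_forests_0 sized_trees_0)
  next
    case False
    then show ?thesis
      using sum_sized_forests_Cons[where w = "\<lambda>_. 1 :: real"]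
      by (simp add: forest_gf_def tree_gf_def fps_mult_nth)
  qed
qed

lemma forest_leaves_gf_rec:
  "forest_leaves_gf P = tree_leaves_gf P * forest_gf P + tree_gf P * forest_leaves_gf P"
proof (rule fps_ext)
  fix n
  show "forest_leaves_gf P $ n = (tree_leaves_gf P * forest_gf P + tree_gf P * forest_leaves_gf P) $ n"
  proof (cases "n = 0")
    case True
    then show ?thesis
      by (simp add: forest_leaves_gf_def tree_leaves_gf_def sized_forests_0 sized_trees_0)
  next
    case False
    then show ?thesis
      using sum_sized_forests_Cons[where w = "\<lambda>ts. real (sum_list (map leaves ts))"]
      by (simp add: forest_leaves_gf_def tree_leaves_gf_def forest_gf_def tree_gf_def
          fps_mult_nth sum.distrib sum_distrib_left sum_distrib_right
          mult.commute[of "real (card (sized_forests _ _))"])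
  qed
qed

lemma forest_leaves_gf_eq: "forest_leaves_gf P = tree_leaves_gf P * forest_gf P ^ 2"
  using forest_leaves_gf_rec[of P] forest_gf_rec[of P] by algebra

lemma sized_trees_all_children: "sized_trees (all_children P) (Suc n) = Node ` sized_forests P n"
proof (intro equalityI subsetI)
  fix t assume "t \<in> sized_trees (all_children P) (Suc n)"
  then show "t \<in> Node ` sized_forests P n"
    by (cases t) (auto simp: sized_trees_def sized_forests_def)
qed (auto simp: sized_trees_def sized_forests_def)

lemma tree_gf_all_children: "tree_gf (all_children P) = fps_X * forest_gf P"
proof (rule fps_ext)
  fix n
  show "tree_gf (all_children P) $ n = (fps_X * forest_gf P) $ n"
    by (cases n) (simp_all add: tree_gf_def forest_gf_def sized_trees_0
        sized_trees_all_children card_image inj_on_def)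
qed

lemma tree_leaves_gf_all_children: "tree_leaves_gf (all_children P) = fps_X * (forest_leaves_gf P + 1)"
proof (rule fps_ext)
  fix n
  show "tree_leaves_gf (all_children P) $ n = (fps_X * (forest_leaves_gf P + 1)) $ n"
  proof (cases n)
    case (Suc m)
    have "leaves (Node ts) = sum_list (map leaves ts) + (if m = 0 then 1 else 0)"
      if "ts \<in> sized_forests P m" for ts
      using that by (auto simp: sized_forests_def nodes_neq_0)
    then show ?thesis
      using Suc by (simp add: tree_leaves_gf_def forest_leaves_gf_def sized_trees_all_children
          sum.reindex inj_on_def sum.distrib sized_forests_0 cong: sum.cong)
  qed (simp add: tree_leaves_gf_def sized_trees_0)
qed

lemma sized_trees_without_leaf:
  "sized_trees (\<lambda>t. P t \<and> t \<noteq> Node []) n = sized_trees P n - {Node []}"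
  by (auto simp: sized_trees_def)

lemma leaf_in_sized_trees: "Node [] \<in> sized_trees P n \<longleftrightarrow> P (Node []) \<and> n = 1"
  by (auto simp: sized_trees_def)

lemma tree_gf_without_leaf:
  assumes "P (Node [])"
  shows "tree_gf (\<lambda>t. P t \<and> t \<noteq> Node []) = tree_gf P - fps_X"
proof (rule fps_ext)
  fix n
  have "Node [] \<in> sized_trees P n \<Longrightarrow> 0 < card (sized_trees P n)"
    using card_gt_0_iff finite_sized_trees by blast
  then show "tree_gf (\<lambda>t. P t \<and> t \<noteq> Node []) $ n = (tree_gf P - fps_X) $ n"
    using assms by (auto simp: tree_gf_def sized_trees_without_leaf leaf_in_sized_trees of_nat_diff
        fps_X_def)
qed

lemma tree_leaves_gf_without_leaf:
  assumes "P (Node [])"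
  shows "tree_leaves_gf (\<lambda>t. P t \<and> t \<noteq> Node []) = tree_leaves_gf P - fps_X"
  using assms by (intro fps_ext) (simp add: tree_leaves_gf_def sized_trees_without_leaf sum_diff1
      finite_sized_trees leaf_in_sized_trees fps_X_def)

lemma tree_gf_odd_leaf:
  "tree_gf (leaf_parity False) = fps_X * (forest_gf (leaf_parity True) - 1)"
  unfolding leaf_parity_False
  by (simp add: tree_gf_without_leaf tree_gf_all_children algebra_simps)

lemma tree_leaves_gf_odd_leaf:
  "tree_leaves_gf (leaf_parity False) = fps_X * forest_leaves_gf (leaf_parity True)"
  unfolding leaf_parity_False
  by (simp add: tree_leaves_gf_without_leaf tree_leaves_gf_all_children algebra_simps)

section \<open>Central trinomial numbers\<close>

(* The coefficients of x^n in (1 + x + x^2)^n, given by their P-recurrence. *)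
fun central_trinomial :: "nat \<Rightarrow> real" where
  "central_trinomial 0 = 1"
| "central_trinomial (Suc 0) = 1"
| "central_trinomial (Suc (Suc n)) =
    ((2 * real n + 3) * central_trinomial (Suc n) + 3 * (real n + 1) * central_trinomial n) / (real n + 2)"

lemma central_trinomial_rec:
  "(real n + 2) * central_trinomial (Suc (Suc n)) =
    (2 * real n + 3) * central_trinomial (Suc n) + 3 * (real n + 1) * central_trinomial n"
  by simp

declare central_trinomial.simps(3) [simp del]

definition central_trinomial_fps :: "real fps" where
  "central_trinomial_fps = Abs_fps central_trinomial"

lemma central_trinomial_fps_deriv:
  "fps_deriv central_trinomial_fps * (1 - 2 * fps_X - 3 * fps_X ^ 2) =
    (1 + 3 * fps_X) * central_trinomial_fps"
proof (rule fps_ext)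
  fix n
  let ?D = "fps_deriv central_trinomial_fps"
  have "?D * (1 - 2 * fps_X - 3 * fps_X ^ 2)
      = ?D - fps_const 2 * (fps_X * ?D) - fps_const 3 * (fps_X ^ 2 * ?D)"
    by (simp add: algebra_simps numeral_fps_const)
  then have "(?D * (1 - 2 * fps_X - 3 * fps_X ^ 2)) $ n
      = ?D $ n - 2 * (fps_X * ?D) $ n - 3 * (fps_X ^ 2 * ?D) $ n"
    by simp
  also have "\<dots> = (central_trinomial_fps + fps_const 3 * (fps_X * central_trinomial_fps)) $ n"
  proof (cases n rule: central_trinomial.cases)
    case (3 k)
    then show ?thesis
      using central_trinomial_rec[of "Suc k"]
      by (simp add: central_trinomial_fps_def fps_X_power_mult_nth) (simp add: algebra_simps)
  qed (simp_all add: central_trinomial_fps_def numeral_eq_Suc central_trinomial.simps(3))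
  also have "\<dots> = ((1 + 3 * fps_X) * central_trinomial_fps) $ n"
    by (simp add: algebra_simps numeral_fps_const)
  finally show "(?D * (1 - 2 * fps_X - 3 * fps_X ^ 2)) $ n =
      ((1 + 3 * fps_X) * central_trinomial_fps) $ n" .
qed

lemma central_trinomial_fps_square:
  "central_trinomial_fps ^ 2 * (1 - 2 * fps_X - 3 * fps_X ^ 2) = 1"
proof -
  let ?T = central_trinomial_fps and ?Q = "1 - 2 * fps_X - 3 * fps_X ^ 2 :: real fps"
  have "fps_deriv (?T ^ 2 * ?Q) = 2 * ?T * (fps_deriv ?T * ?Q) + ?T ^ 2 * fps_deriv ?Q"
    unfolding fps_deriv_mult power2_eq_square by algebra
  also have "fps_deriv ?Q = - 2 - 6 * fps_X"
    by (simp add: numeral_fps_const fps_deriv_power)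
  also have "2 * ?T * (fps_deriv ?T * ?Q) + ?T ^ 2 * (- 2 - 6 * fps_X) = 0"
    unfolding central_trinomial_fps_deriv by algebra
  finally have "?T ^ 2 * ?Q = fps_const ((?T ^ 2 * ?Q) $ 0)"
    using fps_deriv_eq_0_iff by blast
  then show ?thesis
    by (simp add: central_trinomial_fps_def power2_eq_square numeral_fps_const)
qed

lemma central_trinomial_pos: "0 < central_trinomial n"
proof (induction n rule: central_trinomial.induct)
  case (3 n)
  then show ?case
    by (simp add: central_trinomial.simps(3) add_pos_pos)
qed simp_all

lemma central_trinomial_neq_0 [simp]: "central_trinomial n \<noteq> 0"
  using central_trinomial_pos[of n] by simp

lemma central_trinomial_Suc_less: "central_trinomial (Suc n) < central_trinomial (Suc (Suc n))"
proof -
  have "0 < (real n + 1) * (central_trinomial (Suc n) + 3 * central_trinomial n)"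
    using central_trinomial_pos[of n] central_trinomial_pos[of "Suc n"] by simp
  then have "(real n + 2) * central_trinomial (Suc n) < (real n + 2) * central_trinomial (Suc (Suc n))"
    unfolding central_trinomial_rec by (simp add: algebra_simps)
  then show ?thesis
    by simp
qed

lemma even_leaf_tree_gf:
  "2 * tree_gf (leaf_parity True) = 1 - (1 - 3 * fps_X) * central_trinomial_fps"
proof -
  let ?X = "fps_X :: real fps" and ?T = central_trinomial_fps
  let ?e = "tree_gf (leaf_parity True)" and ?w = "1 - (1 - 3 * ?X) * ?T"
  have "(1 + ?X) * ?e ^ 2 - (1 + ?X) * ?e + ?X = 0"
    using tree_gf_all_children[of "leaf_parity False", folded leaf_parity_True]
      tree_gf_odd_leaf forest_gf_rec[of "leaf_parity True"] forest_gf_rec[of "leaf_parity False"]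
    by algebra
  then have "(1 + ?X) * (2 * ?e - ?w) * (2 * ?e + ?w - 2) = 0"
    using central_trinomial_fps_square by algebra
  \<comment> \<open>the vanishing constant term of a tree series excludes the other root\<close>
  moreover have "1 + ?X \<noteq> 0" "2 * ?e + ?w - 2 \<noteq> 0"
    by (rule fps_nonzeroI[of _ 0], simp add: tree_gf_nth_0 central_trinomial_fps_def numeral_fps_const)+
  ultimately show ?thesis
    by simp
qed

lemma odd_leaf_forest_gf:
  "2 * fps_X * forest_gf (leaf_parity False) = 1 - (1 - 3 * fps_X) * central_trinomial_fps"
  using even_leaf_tree_gf tree_gf_all_children[of "leaf_parity False", folded leaf_parity_True]
  by (simp add: mult.assoc)

lemma even_leaf_forest_gf:
  "2 * fps_X * forest_gf (leaf_parity True) = (1 + fps_X) * (1 - (1 - 3 * fps_X) * central_trinomial_fps)"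
proof -
  let ?X = "fps_X :: real fps" and ?T = central_trinomial_fps
  let ?e = "tree_gf (leaf_parity True)" and ?Fe = "forest_gf (leaf_parity True)"
  have "(2 * ?X * ?Fe - (1 + ?X) * (1 - (1 - 3 * ?X) * ?T)) * (2 - 2 * ?e) = 0"
    using central_trinomial_fps_square even_leaf_tree_gf forest_gf_rec[of "leaf_parity True"]
    by algebra
  moreover have "2 - 2 * ?e \<noteq> 0"
    by (rule fps_nonzeroI[of _ 0]) (simp add: tree_gf_nth_0 numeral_fps_const)
  ultimately show ?thesis
    by simp
qed

lemma retakh_branch_forest_gf:
  "2 * fps_X ^ 2 * forest_gf retakh_branch =
    1 - fps_X - (1 + fps_X) * (1 - 3 * fps_X) * central_trinomial_fps"
proof -
  let ?X = "fps_X :: real fps" and ?T = central_trinomial_fps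
  let ?d = "tree_gf retakh_branch" and ?Fd = "forest_gf retakh_branch"
  have "(2 * ?X ^ 2 * ?Fd - (1 - ?X - (1 + ?X) * (1 - 3 * ?X) * ?T)) * (2 - 2 * ?d) = 0"
    using central_trinomial_fps_square even_leaf_forest_gf forest_gf_rec[of retakh_branch]
      tree_gf_all_children[of "leaf_parity True", folded retakh_branch_def]
    by algebra
  moreover have "2 - 2 * ?d \<noteq> 0"
    by (rule fps_nonzeroI[of _ 0]) (simp add: tree_gf_nth_0 numeral_fps_const)
  ultimately show ?thesis
    by simp
qed

lemma retakh_tree_gf:
  "2 * fps_X * tree_gf retakh = 1 - fps_X - (1 + fps_X) * (1 - 3 * fps_X) * central_trinomial_fps"
  using retakh_branch_forest_gf by (simp add: retakh_eq tree_gf_all_children power2_eq_square mult_ac)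

lemma even_leaf_tree_leaves_gf:
  "2 * tree_leaves_gf (leaf_parity True) = fps_X + fps_X * (1 - fps_X) * central_trinomial_fps"
proof -
  let ?X = "fps_X :: real fps" and ?T = central_trinomial_fps
  let ?eL = "tree_leaves_gf (leaf_parity True)" and ?v = "?X + ?X * (1 - ?X) * ?T"
  let ?Fe = "forest_gf (leaf_parity True)" and ?Fo = "forest_gf (leaf_parity False)"
  have eL: "?eL * (1 - ?X ^ 2 * ?Fe ^ 2 * ?Fo ^ 2) = ?X"
    using tree_leaves_gf_all_children[of "leaf_parity False", folded leaf_parity_True]
      forest_leaves_gf_eq[of "leaf_parity False"] tree_leaves_gf_odd_leaf
      forest_leaves_gf_eq[of "leaf_parity True"]
    by algebra
  have v: "?v * (16 * ?X ^ 4 - ?X ^ 2 * (2 * ?X * ?Fe) ^ 2 * (2 * ?X * ?Fo) ^ 2) = 32 * ?X ^ 5"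
    unfolding even_leaf_forest_gf odd_leaf_forest_gf using central_trinomial_fps_square by algebra
  have "16 * ?X ^ 4 * ((2 * ?eL - ?v) * (1 - ?X ^ 2 * ?Fe ^ 2 * ?Fo ^ 2)) =
      32 * ?X ^ 4 * (?eL * (1 - ?X ^ 2 * ?Fe ^ 2 * ?Fo ^ 2)) -
      ?v * (16 * ?X ^ 4 - ?X ^ 2 * (2 * ?X * ?Fe) ^ 2 * (2 * ?X * ?Fo) ^ 2)"
    by algebra
  also have "\<dots> = 0"
    unfolding eL v by (simp flip: power_Suc2)
  finally have "16 * ?X ^ 4 * ((2 * ?eL - ?v) * (1 - ?X ^ 2 * ?Fe ^ 2 * ?Fo ^ 2)) = 0" .
  moreover have "16 * ?X ^ 4 \<noteq> 0" "1 - ?X ^ 2 * ?Fe ^ 2 * ?Fo ^ 2 \<noteq> 0"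
    by (simp add: numeral_fps_const) (rule fps_nonzeroI[of _ 0], simp add: power2_eq_square)
  ultimately show ?thesis
    by simp
qed

lemma retakh_tree_leaves_gf:
  "2 * fps_X ^ 2 * tree_leaves_gf retakh =
    1 - 3 * fps_X - fps_X ^ 2 + 3 * fps_X ^ 3 -
    (1 - 4 * fps_X + 6 * fps_X ^ 3 + fps_X ^ 4) * central_trinomial_fps"
proof -
  let ?X = "fps_X :: real fps" and ?T = central_trinomial_fps
  let ?RL = "tree_leaves_gf retakh" and ?eL = "tree_leaves_gf (leaf_parity True)"
  let ?Fd = "forest_gf retakh_branch" and ?Fe = "forest_gf (leaf_parity True)"
  let ?P = "(- 1 + 3 * ?X + ?X ^ 2 - 3 * ?X ^ 3) + (1 - 4 * ?X + 6 * ?X ^ 3 + ?X ^ 4) * ?T"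
  have "32 * ?X ^ 6 * ?RL =
      32 * ?X ^ 7 + 8 * ?X ^ 4 * (2 * ?X ^ 2 * ?Fd) ^ 2 +
      ?X ^ 2 * (2 * ?X ^ 2 * ?Fd) ^ 2 * (2 * ?X * ?Fe) ^ 2 * (2 * ?eL)"
    using tree_leaves_gf_all_children[of retakh_branch, folded retakh_eq]
      forest_leaves_gf_eq[of retakh_branch]
      tree_leaves_gf_all_children[of "leaf_parity True", folded retakh_branch_def]
      forest_leaves_gf_eq[of "leaf_parity True"]
    by algebra
  also have "\<dots> = - 16 * ?X ^ 4 * ?P"
    unfolding retakh_branch_forest_gf even_leaf_forest_gf even_leaf_tree_leaves_gf
    using central_trinomial_fps_square by algebra
  finally have "16 * ?X ^ 4 * (2 * ?X ^ 2 * ?RL + ?P) = 0"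
    by (simp add: algebra_simps)
  moreover have "16 * ?X ^ 4 \<noteq> 0"
    by (simp add: numeral_fps_const)
  ultimately have "2 * ?X ^ 2 * ?RL + ?P = 0"
    by simp
  then show ?thesis
    by algebra
qed

lemma card_retakh_trees:
  "2 * real (Suc n) * real (card (retakh_trees (Suc n))) =
    central_trinomial (n + 2) - central_trinomial (n + 1)"
proof -
  let ?X = "fps_X :: real fps" and ?T = central_trinomial_fps
  have "?X * (2 * tree_gf retakh) = 1 - ?X - ?T + 2 * (?X * ?T) + 3 * (?X ^ 2 * ?T)"
    using retakh_tree_gf by algebra
  from arg_cong[OF this, of "\<lambda>f. f $ (n + 2)"]
  have coeff: "2 * real (card (retakh_trees (Suc n))) =
      2 * central_trinomial (n + 1) + 3 * central_trinomial n - central_trinomial (n + 2)"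
    by (simp add: numeral_fps_const fps_X_power_mult_nth tree_gf_def retakh_trees_def
        sized_trees_def central_trinomial_fps_def)
  have "2 * real (Suc n) * real (card (retakh_trees (Suc n))) =
      real (Suc n) * (2 * real (card (retakh_trees (Suc n))))"
    by (simp only: mult_ac)
  also have "\<dots> = real (Suc n) *
      (2 * central_trinomial (n + 1) + 3 * central_trinomial n - central_trinomial (n + 2))"
    unfolding coeff ..
  also have "\<dots> = central_trinomial (n + 2) - central_trinomial (n + 1)"
    using central_trinomial_rec[of n] by (simp add: algebra_simps)
  finally show ?thesis .
qed

lemma sum_leaves_retakh_trees:
  "2 * (\<Sum>t\<in>retakh_trees (n + 2). real (leaves t)) =
    4 * central_trinomial (n + 3) - central_trinomial (n + 4) - 6 * central_trinomial (n + 1) -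
    central_trinomial n"
proof -
  let ?X = "fps_X :: real fps" and ?T = central_trinomial_fps
  have "?X ^ 2 * (2 * tree_leaves_gf retakh) =
      1 - 3 * ?X - ?X ^ 2 + 3 * ?X ^ 3 - ?T + 4 * (?X * ?T) - 6 * (?X ^ 3 * ?T) - ?X ^ 4 * ?T"
    using retakh_tree_leaves_gf by algebra
  from arg_cong[OF this, of "\<lambda>f. f $ (n + 4)"] show ?thesis
    by (simp add: numeral_fps_const fps_X_power_mult_nth tree_leaves_gf_def retakh_trees_def
        sized_trees_def central_trinomial_fps_def add.commute)
qed

lemma avg_leaves_central_trinomial:
  "avg_leaves (n + 2) = real (n + 2) *
    (4 * central_trinomial (n + 3) - central_trinomial (n + 4) - 6 * central_trinomial (n + 1) -
      central_trinomial n) / (central_trinomial (n + 3) - central_trinomial (n + 2))"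
proof -
  have "central_trinomial (n + 3) \<noteq> central_trinomial (n + 2)"
    using central_trinomial_Suc_less[of "n + 1"] by (simp add: numeral_eq_Suc)
  moreover have card: "real (card (retakh_trees (n + 2))) =
      (central_trinomial (n + 3) - central_trinomial (n + 2)) / (2 * real (n + 2))"
    using card_retakh_trees[of "n + 1"] by (simp add: numeral_eq_Suc field_simps)
  moreover have leaves: "(\<Sum>t\<in>retakh_trees (n + 2). real (leaves t)) =
      (4 * central_trinomial (n + 3) - central_trinomial (n + 4) - 6 * central_trinomial (n + 1) -
        central_trinomial n) / 2"
    using sum_leaves_retakh_trees[of n] by simp
  ultimately show ?thesis
    unfolding avg_leaves_def card leaves by (simp add: field_simps)
qed

section \<open>Asymptotics\<close>

(* With (a, b, c) the values of the recurrence at n, n + 1, n + 2 and x = n: the invariant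
   0 <= 3 - T_(n+1)/T_n <= 6/(n+3) propagates. *)
lemma trinomial_recurrence_ratio_step:
  fixes x a b c :: real
  assumes "0 \<le> x" "0 < a" "(x + 2) * c = (2 * x + 3) * b + 3 * (x + 1) * a"
    and "b \<le> 3 * a" "(x + 3) * (3 * a - b) \<le> 6 * a"
  shows "c \<le> 3 * b" "(x + 4) * (3 * b - c) \<le> 6 * b"
proof -
  have error: "(x + 2) * (3 * b - c) = 6 * a - (x + 3) * (3 * a - b)"
    using assms(3) by (simp add: algebra_simps)
  then have "0 \<le> (x + 2) * (3 * b - c)"
    using assms(5) by simp
  then show "c \<le> 3 * b"
    using assms(1) by (simp add: zero_le_mult_iff)
  have "(x + 2) * ((x + 4) * (3 * b - c)) =
      (x + 2) * (6 * b) - (12 * (x + 1) * a + (3 * a - b) * (x\<^sup>2 + x))"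
    unfolding mult.left_commute[of "x + 2"] error by (simp add: algebra_simps power2_eq_square)
  also have "\<dots> \<le> (x + 2) * (6 * b)"
  proof -
    have "0 \<le> 12 * (x + 1) * a + (3 * a - b) * (x\<^sup>2 + x)"
      using assms(1,2,4) by (intro add_nonneg_nonneg mult_nonneg_nonneg) simp_all
    then show ?thesis
      by linarith
  qed
  finally show "(x + 4) * (3 * b - c) \<le> 6 * b"
    using assms(1) by (simp add: mult_le_cancel_left_pos)
qed

lemma central_trinomial_ratio_bounds:
  "central_trinomial (Suc n) \<le> 3 * central_trinomial n \<and>
    (real n + 3) * (3 * central_trinomial n - central_trinomial (Suc n)) \<le> 6 * central_trinomial n"
proof (induction n)
  case (Suc n)
  then show ?case
    using trinomial_recurrence_ratio_step[OF _ central_trinomial_pos central_trinomial_rec[of n]]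
    by (simp add: add.commute)
qed simp

lemma central_trinomial_ratio_tendsto:
  "(\<lambda>n. central_trinomial (Suc n) / central_trinomial n) \<longlonglongrightarrow> 3"
proof (rule tendsto_sandwich)
  have "3 - 6 / (real n + 3) \<le> central_trinomial (Suc n) / central_trinomial n"
    and "central_trinomial (Suc n) / central_trinomial n \<le> 3" for n
    using central_trinomial_ratio_bounds[of n] central_trinomial_pos[of n]
    by (simp_all add: field_simps)
  then show "\<forall>\<^sub>F n in sequentially. 3 - 6 / (real n + 3) \<le> central_trinomial (Suc n) / central_trinomial n"
    and "\<forall>\<^sub>F n in sequentially. central_trinomial (Suc n) / central_trinomial n \<le> 3"
    by simp_all
  have "(\<lambda>n. 6 / (real n + 3)) \<longlonglongrightarrow> 0"
    using LIMSEQ_ignore_initial_segment[OF lim_const_over_n[of 6], of 3] by (simp add: add.commute)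
  then show "(\<lambda>n. 3 - 6 / (real n + 3)) \<longlonglongrightarrow> 3"
    using tendsto_diff[OF tendsto_const] by fastforce
qed simp

lemma central_trinomial_shift_tendsto:
  "(\<lambda>n. central_trinomial (n + k) / central_trinomial n) \<longlonglongrightarrow> 3 ^ k"
proof (induction k)
  case (Suc k)
  have "(\<lambda>n. central_trinomial (Suc (n + k)) / central_trinomial (n + k) *
      (central_trinomial (n + k) / central_trinomial n)) \<longlonglongrightarrow> 3 * 3 ^ k"
    using LIMSEQ_ignore_initial_segment[OF central_trinomial_ratio_tendsto, of k] Suc
    by (intro tendsto_mult) (simp_all add: add.commute)
  then show ?case
    by simp
qed simp

lemma avg_leaves_per_node_tendsto: "(\<lambda>n. avg_leaves n / real n) \<longlonglongrightarrow> 4 / 9"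
proof -
  let ?q = "\<lambda>k n. central_trinomial (n + k) / central_trinomial n"
  have "(\<lambda>n. (4 * ?q 3 n - ?q 4 n - 6 * ?q 1 n - 1) / (?q 3 n - ?q 2 n))
      \<longlonglongrightarrow> (4 * 3 ^ 3 - 3 ^ 4 - 6 * 3 ^ 1 - 1) / (3 ^ 3 - 3 ^ 2)"
    by (intro tendsto_intros central_trinomial_shift_tendsto) simp
  moreover have "avg_leaves (n + 2) / real (n + 2) =
      (4 * ?q 3 n - ?q 4 n - 6 * ?q 1 n - 1) / (?q 3 n - ?q 2 n)" for n
  proof -
    have num: "4 * ?q 3 n - ?q 4 n - 6 * ?q 1 n - 1 =
        (4 * central_trinomial (n + 3) - central_trinomial (n + 4) - 6 * central_trinomial (n + 1) -
          central_trinomial n) / central_trinomial n"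
      and den: "?q 3 n - ?q 2 n =
        (central_trinomial (n + 3) - central_trinomial (n + 2)) / central_trinomial n"
      by (simp_all add: field_simps)
    have cancel: "k * a / b / k = (a / c) / (b / c)" if "c \<noteq> 0" "k \<noteq> 0" for a b c k :: real
      using that by (simp add: field_simps)
    show ?thesis
      unfolding avg_leaves_central_trinomial num den by (intro cancel) simp_all
  qed
  ultimately have "(\<lambda>n. avg_leaves (n + 2) / real (n + 2)) \<longlonglongrightarrow> 4 / 9"
    by simp
  then show ?thesis
    by (rule LIMSEQ_offset)
qed

theorem mainTheorem7:
  shows "avg_leaves \<sim>[at_top] (\<lambda>n. 4 / 9 * real n)"
proof (rule asymp_equivI')
  show "(\<lambda>n. avg_leaves n / (4 / 9 * real n)) \<longlonglongrightarrow> 1"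
    using tendsto_mult_left[OF avg_leaves_per_node_tendsto, of "9 / 4"] by (simp add: mult.commute)
qed

end
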